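(* For all integers $1\le j\le k$, writing $[m]=\{0,1,\ldots,m\}$, we have $(j+1)\,d([k-j])\le 2\,d([k-1])$. Equality holds if and only if $j=1$, or $k=3$ and $j=2$.
   Context: For $A,B\subseteq\mathbb{N}=\{0,1,\ldots\}$, $A+B=\{a+b:a\in A,b\in B\}$. For a nonempty finite $C\subseteq\mathbb{N}$, $d(C)$ is the number of sets $B\subseteq\mathbb{N}$ such that $B+D=C$ for some $D\subseteq\mathbb{N}$. *)

theory Defs
  imports Main
begin

definition sumset :: "nat set \<Rightarrow> nat set \<Rightarrow> nat set" where
  "sumset A B = {a + b | a b. a \<in> A \<and> b \<in> B}"

definition dcount :: "nat set \<Rightarrow> nat" where
  "dcount C = card {B :: nat set. \<exists>D :: nat set. sumset B D = C}"

end

theory Submission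
  imports Defs
begin

(* A summand B of {0..m} with largest element b is exactly a set with 0, b in B, B a subset of
   {0..b}, whose consecutive elements differ by at most m + 1 - b (take D = {0..m - b}).  Hence
   d({0..m}) = sum over b <= m of r(b, m + 1 - b), where r(N, G) counts such "gap sets" of {0..N}
   with gaps at most G.  Removing the largest element gives r(N + 1, G) = sum of r(b, G) over
   N + 1 - G <= b <= N, so for G >= 2 both r(N + 2) >= r(N + 1) + r(N) and r(N + 1) <= 2 r(N),
   i.e. 3 r(N + 1) <= 2 r(N + 2).  Comparing d({0..m}) and d({0..m + 1}) term by term yields
   3 d({0..m}) <= 2 d({0..m + 1}), strictly unless m = 1, and iterating this along the
   increasing sequence d({0..m}) gives (j + 1) d({0..k - j}) <= 2 d({0..k - 1}). *)

(* The last conjunct says that consecutive elements of B differ by at most G. *)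
definition gap_sets :: "nat \<Rightarrow> nat \<Rightarrow> nat set set" where
  "gap_sets N G =
     {B. B \<subseteq> {0..N} \<and> 0 \<in> B \<and> N \<in> B \<and> (\<forall>x\<le>N. \<exists>y\<in>B. y \<le> x \<and> x < y + G)}"

definition gap_count :: "nat \<Rightarrow> nat \<Rightarrow> nat" where
  "gap_count N G = card (gap_sets N G)"

lemma finite_gap_sets: "finite (gap_sets N G)"
  by (rule finite_subset[of _ "Pow {0..N}"]) (auto simp: gap_sets_def)

lemma gap_sets_Max:
  assumes "B \<in> gap_sets N G"
  shows "Max B = N"
  using assms by (intro Max_eqI) (auto simp: gap_sets_def intro: finite_subset)

lemma gap_sets_subset: "B \<in> gap_sets N G \<Longrightarrow> B \<subseteq> {0..N}"
  by (simp add: gap_sets_def)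

lemma gap_sets_0: "1 \<le> G \<Longrightarrow> gap_sets 0 G = {{0}}"
  by (auto simp: gap_sets_def)

lemma gap_sets_Suc_decompose:
  assumes B: "B \<in> gap_sets (Suc N) G"
  obtains b where "b \<le> N" "N < b + G" "B - {Suc N} \<in> gap_sets b G"
proof -
  define B' where "B' = B - {Suc N}"
  have cover: "\<forall>x\<le>Suc N. \<exists>y\<in>B. y \<le> x \<and> x < y + G"
    using B by (simp add: gap_sets_def)
  have B'_le: "B' \<subseteq> {0..N}" and "0 \<in> B'"
    using B by (auto simp: gap_sets_def B'_def)
  then have "finite B'" "B' \<noteq> {}"
    by (auto intro: finite_subset)
  define b where "b = Max B'"
  have "b \<in> B'" and Max_ge: "\<And>y. y \<in> B' \<Longrightarrow> y \<le> b"
    using \<open>finite B'\<close> \<open>B' \<noteq> {}\<close> by (simp_all add: b_def)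
  then have "b \<le> N"
    using B'_le by auto
  obtain y where y: "y \<in> B" "y \<le> N" "N < y + G"
    using cover le_SucI[OF order_refl] by blast
  then have "y \<le> b"
    by (intro Max_ge) (simp add: B'_def)
  with y have "N < b + G" by linarith
  have "B' \<in> gap_sets b G"
    unfolding gap_sets_def
  proof (intro CollectI conjI allI impI)
    show "B' \<subseteq> {0..b}" using Max_ge by auto
    fix x assume "x \<le> b"
    with \<open>b \<le> N\<close> have "x \<le> Suc N" by simp
    then obtain z where "z \<in> B" "z \<le> x" "x < z + G"
      using cover by blast
    with \<open>x \<le> b\<close> \<open>b \<le> N\<close> show "\<exists>y\<in>B'. y \<le> x \<and> x < y + G"
      by (auto simp: B'_def)
  qed fact+
  with \<open>b \<le> N\<close> \<open>N < b + G\<close> show thesis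
    unfolding B'_def by (rule that)
qed

lemma insert_gap_sets:
  assumes B: "B \<in> gap_sets b G" and "b \<le> N" "N < b + G"
  shows "insert (Suc N) B \<in> gap_sets (Suc N) G"
  unfolding gap_sets_def
proof (intro CollectI conjI allI impI)
  show "insert (Suc N) B \<subseteq> {0..Suc N}" "0 \<in> insert (Suc N) B"
    using B \<open>b \<le> N\<close> by (auto simp: gap_sets_def)
  fix x assume "x \<le> Suc N"
  consider "x \<le> b" | "b < x" "x \<le> N" | "x = Suc N"
    using \<open>x \<le> Suc N\<close> by linarith
  then show "\<exists>y\<in>insert (Suc N) B. y \<le> x \<and> x < y + G"
  proof cases
    case 1
    then obtain y where "y \<in> B" "y \<le> x" "x < y + G"
      using B by (auto simp: gap_sets_def)
    then show ?thesis by blast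
  next
    case 2
    moreover have "b \<in> B" using B by (simp add: gap_sets_def)
    ultimately show ?thesis using \<open>N < b + G\<close> by (intro bexI[of _ b]) auto
  next
    case 3
    then show ?thesis using \<open>b \<le> N\<close> \<open>N < b + G\<close> by (intro bexI[of _ "Suc N"]) auto
  qed
qed simp

lemma gap_sets_Suc:
  "gap_sets (Suc N) G = (\<Union>b\<in>{Suc N - G..N}. insert (Suc N) ` gap_sets b G)"
proof (intro equalityI subsetI)
  fix B assume B: "B \<in> gap_sets (Suc N) G"
  then obtain b where "b \<le> N" "N < b + G" "B - {Suc N} \<in> gap_sets b G"
    by (rule gap_sets_Suc_decompose)
  moreover have "b \<in> {Suc N - G..N}"
    using \<open>b \<le> N\<close> \<open>N < b + G\<close> by simp
  moreover have "B = insert (Suc N) (B - {Suc N})"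
    using B by (simp add: gap_sets_def insert_absorb)
  ultimately show "B \<in> (\<Union>b\<in>{Suc N - G..N}. insert (Suc N) ` gap_sets b G)"
    by blast
next
  fix B assume "B \<in> (\<Union>b\<in>{Suc N - G..N}. insert (Suc N) ` gap_sets b G)"
  then obtain b B' where "b \<in> {Suc N - G..N}" "B' \<in> gap_sets b G" "B = insert (Suc N) B'"
    by blast
  then show "B \<in> gap_sets (Suc N) G"
    by (auto intro!: insert_gap_sets)
qed

lemma insert_Suc_gap_sets_eq:
  assumes "X \<in> gap_sets b G" "X' \<in> gap_sets b' G" "b \<le> N" "b' \<le> N"
    and "insert (Suc N) X = insert (Suc N) X'"
  shows "X = X'"
proof -
  have "Suc N \<notin> X" "Suc N \<notin> X'"
    using assms(1-4) by (auto simp: gap_sets_def)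
  then show ?thesis
    using assms(5) by (metis insert_ident)
qed

lemma gap_count_Suc: "gap_count (Suc N) G = (\<Sum>b=Suc N - G..N. gap_count b G)"
proof -
  let ?A = "\<lambda>b. insert (Suc N) ` gap_sets b G"
  have disjoint: "?A b \<inter> ?A b' = {}" if "b \<le> N" "b' \<le> N" "b \<noteq> b'" for b b'
  proof -
    have "b = b'" if "X \<in> gap_sets b G" "X' \<in> gap_sets b' G"
      and "insert (Suc N) X = insert (Suc N) X'" for X X'
      using insert_Suc_gap_sets_eq[OF that(1,2) \<open>b \<le> N\<close> \<open>b' \<le> N\<close> that(3)]
        gap_sets_Max[OF that(1)] gap_sets_Max[OF that(2)] by simp
    with \<open>b \<noteq> b'\<close> show ?thesis by blast
  qed
  have card_A: "card (?A b) = gap_count b G" if "b \<le> N" for b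
    unfolding gap_count_def
    by (rule card_image, rule inj_onI) (use insert_Suc_gap_sets_eq that in blast)
  have "gap_count (Suc N) G = (\<Sum>b=Suc N - G..N. card (?A b))"
    unfolding gap_count_def gap_sets_Suc
    by (rule card_UN_disjoint) (use finite_gap_sets disjoint in auto)
  also have "\<dots> = (\<Sum>b=Suc N - G..N. gap_count b G)"
    by (rule sum.cong) (simp_all add: card_A)
  finally show ?thesis .
qed

lemma gap_count_0: "1 \<le> G \<Longrightarrow> gap_count 0 G = 1"
  by (simp add: gap_count_def gap_sets_0)

lemma gap_count_1: "1 \<le> G \<Longrightarrow> gap_count 1 G = 1"
  using gap_count_Suc[of 0 G] by (simp add: gap_count_0)

lemma gap_count_2: "2 \<le> G \<Longrightarrow> gap_count 2 G = 2"
  using gap_count_Suc[of 1 G] gap_count_0[of G] gap_count_1[of G] by (simp add: numeral_2_eq_2)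

lemma gap_count_width_1: "gap_count N 1 = 1"
  by (induction N) (simp_all add: gap_count_0 gap_count_Suc)

lemma gap_count_Suc_Suc_ge:
  assumes "2 \<le> G"
  shows "gap_count (Suc N) G + gap_count N G \<le> gap_count (Suc (Suc N)) G"
proof -
  have "gap_count (Suc N) G + gap_count N G = (\<Sum>b\<in>{N, Suc N}. gap_count b G)"
    by simp
  also have "\<dots> \<le> (\<Sum>b=Suc (Suc N) - G..Suc N. gap_count b G)"
    by (rule sum_mono2) (use assms in auto)
  finally show ?thesis
    by (simp only: gap_count_Suc)
qed

lemma gap_count_Suc_le_double:
  assumes "1 \<le> G"
  shows "gap_count (Suc N) G \<le> 2 * gap_count N G"
proof (cases N)
  case 0
  then show ?thesis using gap_count_0[OF assms] gap_count_1[OF assms] by simp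
next
  case (Suc M)
  have "gap_count (Suc N) G = gap_count N G + (\<Sum>b=Suc N - G..M. gap_count b G)"
    using assms by (simp add: gap_count_Suc Suc add.commute)
  also have "(\<Sum>b=Suc N - G..M. gap_count b G) \<le> (\<Sum>b=Suc M - G..M. gap_count b G)"
    by (rule sum_mono2) (auto simp: Suc)
  also have "\<dots> = gap_count N G"
    by (simp add: gap_count_Suc Suc)
  finally show ?thesis by simp
qed

lemma gap_count_growth:
  assumes "2 \<le> G"
  shows "3 * gap_count (Suc N) G \<le> 2 * gap_count (Suc (Suc N)) G"
  using gap_count_Suc_Suc_ge[OF assms, of N] gap_count_Suc_le_double[of G N] assms
  by linarith

lemma summand_of_interval_in_gap_sets:
  assumes BD: "sumset B D = {0..m}"
  shows "Max B \<le> m" "B \<in> gap_sets (Max B) (Suc m - Max B)"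
proof -
  have sum_le: "y + z \<le> m" if "y \<in> B" "z \<in> D" for y z
  proof -
    have "y + z \<in> sumset B D"
      using that unfolding sumset_def by blast
    then show ?thesis using BD by simp
  qed
  have "0 \<in> sumset B D"
    using BD by simp
  then have "0 \<in> B" "0 \<in> D"
    unfolding sumset_def by auto
  then have "B \<subseteq> {0..m}"
    using sum_le by fastforce
  then have "finite B"
    by (rule finite_subset) simp
  define b where "b = Max B"
  have "b \<in> B" and Max_ge: "\<And>y. y \<in> B \<Longrightarrow> y \<le> b"
    using \<open>finite B\<close> \<open>0 \<in> B\<close> by (auto simp: b_def intro: Max_in)
  then show "Max B \<le> m"
    using \<open>B \<subseteq> {0..m}\<close> by (auto simp: b_def)
  have "B \<in> gap_sets b (Suc m - b)"
    unfolding gap_sets_def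
  proof (intro CollectI conjI allI impI)
    show "B \<subseteq> {0..b}" using Max_ge by auto
    fix x assume "x \<le> b"
    with \<open>Max B \<le> m\<close> have "x \<in> sumset B D"
      using BD by (simp add: b_def)
    then obtain y z where "y \<in> B" "z \<in> D" "x = y + z"
      unfolding sumset_def by blast
    moreover have "z \<le> m - b"
      using sum_le[OF \<open>b \<in> B\<close> \<open>z \<in> D\<close>] by simp
    ultimately show "\<exists>y\<in>B. y \<le> x \<and> x < y + (Suc m - b)"
      using \<open>Max B \<le> m\<close> unfolding b_def[symmetric] by (intro bexI[of _ y]) auto
  qed fact+
  then show "B \<in> gap_sets (Max B) (Suc m - Max B)"
    by (simp add: b_def)
qed

lemma sumset_gap_sets_interval:
  assumes "b \<le> m" and B: "B \<in> gap_sets b (Suc m - b)"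
  shows "sumset B {0..m - b} = {0..m}"
proof (intro equalityI subsetI)
  fix x assume "x \<in> sumset B {0..m - b}"
  then obtain y z where "y \<in> B" "z \<le> m - b" "x = y + z"
    unfolding sumset_def by auto
  moreover have "y \<le> b"
    using gap_sets_subset[OF B] \<open>y \<in> B\<close> by auto
  ultimately show "x \<in> {0..m}"
    using \<open>b \<le> m\<close> by simp
next
  fix x assume "x \<in> {0..m}"
  obtain y where "y \<in> B" "y \<le> x" "x - y \<le> m - b"
  proof (cases "x \<le> b")
    case True
    then obtain y where "y \<in> B" "y \<le> x" "x < y + (Suc m - b)"
      using B unfolding gap_sets_def by blast
    then show thesis using that by simp
  next
    case False
    moreover have "b \<in> B" using B by (simp add: gap_sets_def)
    ultimately show thesis using that \<open>x \<in> {0..m}\<close> by simp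
  qed
  then show "x \<in> sumset B {0..m - b}"
    unfolding sumset_def by (intro CollectI exI[of _ y] exI[of _ "x - y"]) simp
qed

lemma summands_interval:
  "{B. \<exists>D. sumset B D = {0..m}} = (\<Union>b\<le>m. gap_sets b (Suc m - b))"
proof (intro equalityI subsetI)
  fix B assume "B \<in> {B. \<exists>D. sumset B D = {0..m}}"
  then obtain D where "sumset B D = {0..m}"
    by blast
  from summand_of_interval_in_gap_sets[OF this]
  show "B \<in> (\<Union>b\<le>m. gap_sets b (Suc m - b))"
    by (intro UN_I[of "Max B"]) simp_all
next
  fix B assume "B \<in> (\<Union>b\<le>m. gap_sets b (Suc m - b))"
  then obtain b where "b \<le> m" "B \<in> gap_sets b (Suc m - b)"
    by blast
  from sumset_gap_sets_interval[OF this]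
  show "B \<in> {B. \<exists>D. sumset B D = {0..m}}"
    by blast
qed

lemma dcount_interval: "dcount {0..m} = (\<Sum>b\<le>m. gap_count b (Suc m - b))"
proof -
  have "gap_sets b (Suc m - b) \<inter> gap_sets b' (Suc m - b') = {}" if "b \<noteq> b'" for b b'
    using gap_sets_Max[of _ b] gap_sets_Max[of _ b'] that by fastforce
  then show ?thesis
    unfolding dcount_def summands_interval gap_count_def
    by (intro card_UN_disjoint) (simp_all add: finite_gap_sets)
qed

lemma dcount_interval_Suc:
  "dcount {0..Suc m} = 1 + (\<Sum>b\<le>m. gap_count (Suc b) (Suc m - b))"
proof -
  have "dcount {0..Suc m} = gap_count 0 (Suc (Suc m))
      + (\<Sum>b\<le>m. gap_count (Suc b) (Suc (Suc m) - Suc b))"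
    unfolding dcount_interval by (simp only: sum.atMost_Suc_shift diff_zero)
  then show ?thesis
    by (simp add: gap_count_0)
qed

lemma dcount_interval_0: "dcount {0..0} = 1"
  using dcount_interval[of 0] gap_count_0[of 1] by simp

lemma dcount_interval_1: "dcount {0..1} = 2"
  using dcount_interval_Suc[of 0] gap_count_width_1[of 1] by simp

lemma dcount_interval_2: "dcount {0..2} = 3"
  using dcount_interval_Suc[of 1] gap_count_1[of 2] gap_count_width_1[of 2]
  by (simp add: numeral_2_eq_2)

(* The slack terms sum to 2, which is twice the constant term of dcount_interval_Suc. *)
lemma gap_count_termwise_bound:
  assumes "b \<le> m"
  shows "3 * gap_count b (Suc m - b)
    \<le> 2 * gap_count (Suc b) (Suc m - b) + of_bool (b = 0) + of_bool (b = m)"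
proof -
  consider "b = 0" | "b = m" "b \<noteq> 0" | b' where "b = Suc b'" "b < m"
    using assms by (cases b) force+
  then show ?thesis
  proof cases
    case 1
    then show ?thesis using gap_count_0[of "Suc m"] gap_count_1[of "Suc m"] by simp
  next
    case 2
    then show ?thesis using gap_count_width_1[of m] gap_count_width_1[of "Suc m"] by simp
  next
    case 3
    then have "2 \<le> Suc m - b" by simp
    from gap_count_growth[OF this, of b'] show ?thesis
      using 3 by simp
  qed
qed

lemma two_dcount_interval_Suc:
  "2 * dcount {0..Suc m}
    = (\<Sum>b\<le>m. 2 * gap_count (Suc b) (Suc m - b) + of_bool (b = 0) + of_bool (b = m))"
  by (simp add: dcount_interval_Suc sum.distrib sum_distrib_left)

lemma three_dcount_interval_le: "3 * dcount {0..m} \<le> 2 * dcount {0..Suc m}"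
  unfolding dcount_interval[of m] two_dcount_interval_Suc sum_distrib_left
  by (rule sum_mono) (simp add: gap_count_termwise_bound)

lemma three_dcount_interval_less:
  assumes "m \<noteq> 1"
  shows "3 * dcount {0..m} < 2 * dcount {0..Suc m}"
proof (cases "m = 0")
  case True
  then show ?thesis
    using dcount_interval_0 dcount_interval_1 by simp
next
  case False
  with assms have "2 \<le> m" by simp
  have "3 * gap_count 1 (Suc m - 1) < 2 * gap_count (Suc 1) (Suc m - 1)"
    using \<open>2 \<le> m\<close> gap_count_1[of m] gap_count_2[of m] by (simp add: numeral_2_eq_2)
  then have strict_at_1: "3 * gap_count 1 (Suc m - 1)
      < 2 * gap_count (Suc 1) (Suc m - 1) + of_bool (1 = 0) + of_bool (1 = m)"
    by linarith
  show ?thesis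
    unfolding dcount_interval[of m] two_dcount_interval_Suc sum_distrib_left
  proof (rule sum_strict_mono_ex1)
    show "\<exists>b\<in>{..m}. 3 * gap_count b (Suc m - b)
        < 2 * gap_count (Suc b) (Suc m - b) + of_bool (b = 0) + of_bool (b = m)"
      by (rule bexI[of _ 1], fact strict_at_1) (use \<open>2 \<le> m\<close> in simp)
  qed (simp_all add: gap_count_termwise_bound)
qed

lemma dcount_interval_pos: "0 < dcount {0..m}"
proof -
  have "gap_count 0 (Suc m - 0) \<le> (\<Sum>b\<le>m. gap_count b (Suc m - b))"
    by (rule member_le_sum) simp_all
  then show ?thesis
    by (simp add: dcount_interval gap_count_0)
qed

lemma strict_mono_dcount_interval: "strict_mono (\<lambda>m. dcount {0..m})"
  unfolding strict_mono_Suc_iff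
proof
  fix m
  show "dcount {0..m} < dcount {0..Suc m}"
    using three_dcount_interval_le[of m] dcount_interval_pos[of m] by linarith
qed

lemma dcount_interval_add_le:
  assumes "1 \<le> i"
  shows "(i + 2) * dcount {0..n} \<le> 2 * dcount {0..n + i}"
  using assms
proof (induction i rule: nat_induct_at_least)
  case base
  then show ?case
    using three_dcount_interval_le[of n] by simp
next
  case (Suc i)
  have "dcount {0..n} \<le> dcount {0..n + i}"
    using strict_mono_less_eq[OF strict_mono_dcount_interval] by simp
  then show ?case
    using Suc.IH three_dcount_interval_le[of "n + i"] by simp
qed

lemma dcount_interval_add_less:
  assumes "1 \<le> i" and "i = 1 \<Longrightarrow> n \<noteq> 1"
  shows "(i + 2) * dcount {0..n} < 2 * dcount {0..n + i}"
proof (cases "i = 1")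
  case True
  then show ?thesis
    using assms(2) three_dcount_interval_less[of n] by simp
next
  case False
  with assms(1) obtain i' where "i = Suc i'" "1 \<le> i'"
    by (cases i) auto
  moreover have "dcount {0..n} < dcount {0..n + i'}"
    using strict_monoD[OF strict_mono_dcount_interval] \<open>1 \<le> i'\<close> by simp
  ultimately show ?thesis
    using dcount_interval_add_le[of i' n] three_dcount_interval_le[of "n + i'"] by simp
qed

theorem mainTheorem8:
  fixes j k :: nat
  assumes "1 \<le> j" and "j \<le> k"
  shows "(j + 1) * dcount {0..k - j} \<le> 2 * dcount {0..k - 1}
    \<and> ((j + 1) * dcount {0..k - j} = 2 * dcount {0..k - 1}
         \<longleftrightarrow> (j = 1 \<or> (k = 3 \<and> j = 2)))"
proof (cases "j = 1")
  case True
  then show ?thesis by simp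
next
  case False
  define i where "i = j - 1"
  have "1 \<le> i" "j + 1 = i + 2" "k - 1 = (k - j) + i"
    using assms False by (simp_all add: i_def)
  show ?thesis
  proof (cases "k = 3 \<and> j = 2")
    case True
    then show ?thesis
      using dcount_interval_1 dcount_interval_2 by simp
  next
    case not_exceptional: False
    have "(j + 1) * dcount {0..k - j} < 2 * dcount {0..k - 1}"
      using dcount_interval_add_less[of i "k - j"] \<open>1 \<le> i\<close> not_exceptional assms
      unfolding \<open>j + 1 = i + 2\<close> \<open>k - 1 = (k - j) + i\<close> by (auto simp: i_def)
    with False not_exceptional show ?thesis by simp
  qed
qed

end
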